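(* For all integers $n\geq 1$ and $j\geq 0$, $$FO_{j,2}(n)=FD_{j,2}(n).$$
   Context: A partition is a finite nonincreasing sequence of positive integers (its parts); its size is the sum of its parts and is not fixed here. For a partition $\pi$, let $\alpha(\pi)$ be its largest part and $\lambda(\pi)$ its number of parts; the perimeter of $\pi$ is $\alpha(\pi)+\lambda(\pi)-1$ (the largest hook length of its Ferrers diagram). For a condition $*$, $r(n\mid * )$ denotes the number of partitions (of any size) with perimeter $n$ satisfying $*$. Define $FO_{j,2}(n)$ to be the number of partitions of perimeter $n$ having exactly $j$ distinct part sizes that are even (each such part may repeat), and $FD_{j,2}(n)$ to be the number of partitions of perimeter $n$ having exactly $j$ distinct part sizes that each appear at least $2$ times. *)

theory Defs
  imports Main
begin

definition is_partition :: "nat list \<Rightarrow> bool" where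
  "is_partition p \<longleftrightarrow> sorted_wrt (\<ge>) p \<and> (\<forall>x\<in>set p. 0 < x)"

definition perimeter :: "nat list \<Rightarrow> nat" where
  "perimeter p = Max (set p) + length p - 1"

definition partitions_perim :: "nat \<Rightarrow> nat list set" where
  "partitions_perim n = {p. is_partition p \<and> p \<noteq> [] \<and> perimeter p = n}"

definition FO2 :: "nat \<Rightarrow> nat \<Rightarrow> nat" where
  "FO2 j n = card {p \<in> partitions_perim n. card {x \<in> set p. even x} = j}"

definition FD2 :: "nat \<Rightarrow> nat \<Rightarrow> nat" where
  "FD2 j n = card {p \<in> partitions_perim n. card {x \<in> set p. 2 \<le> count_list p x} = j}"

end

theory Submission
  imports Defs
begin

text \<open>
  Listing the parts of a partition in increasing order identifies the partitions of perimeter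
  \<open>n\<close> with the binary words \<open>w\<close> of length \<open>n - 1\<close>: walking along \<open>w\<close> from height 1, the
  letter \<open>True\<close> raises the height and \<open>False\<close> records a part equal to the current height,
  and one more part is recorded at the end. In the word \<open>True # w @ [False]\<close>, the distinct
  even parts correspond to the factors \<open>[True, False]\<close> read at even height and the repeated
  part sizes to the factors \<open>[True, False, False]\<close>. Replacing each letter by its xor with the
  preceding one (the first letter with \<open>True\<close>) is a bijection on words of length \<open>n - 1\<close> that turns the second statistic
  into the first.
\<close>

fun path_parts :: "nat \<Rightarrow> bool list \<Rightarrow> nat list" where
  "path_parts k [] = [k]"
| "path_parts k (True # w) = path_parts (Suc k) w"
| "path_parts k (False # w) = k # path_parts k w"

lemma path_parts_not_Nil [simp]: "path_parts k w \<noteq> []"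
  by (induction k w rule: path_parts.induct) auto

lemma path_parts_ge: "x \<in> set (path_parts k w) \<Longrightarrow> k \<le> x"
  by (induction k w rule: path_parts.induct) (auto dest: Suc_leD)

lemma Suc_notin_path_parts [simp]: "k \<notin> set (path_parts (Suc k) w)"
  using path_parts_ge by fastforce

lemma path_parts_Suc_neq_Cons [simp]: "path_parts (Suc k) w \<noteq> k # ys"
  by (metis Suc_notin_path_parts list.set_intros(1))

lemma sorted_path_parts: "sorted (path_parts k w)"
  by (induction k w rule: path_parts.induct) (auto dest: path_parts_ge)

lemma length_path_parts: "length (path_parts k w) = Suc (count_list w False)"
  by (induction k w rule: path_parts.induct) auto

lemma Max_path_parts: "Max (set (path_parts k w)) = k + count_list w True"
  by (induction k w rule: path_parts.induct) (auto simp: max_def dest: path_parts_ge)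

lemma perimeter_rev_path_parts: "perimeter (rev (path_parts k w)) = k + length w"
proof -
  have "count_list w True + count_list w False = length w"
    by (induction w) auto
  then show ?thesis
    by (simp add: perimeter_def Max_path_parts length_path_parts)
qed

lemma path_parts_replicate_True: "path_parts k (replicate d True @ w) = path_parts (k + d) w"
  by (induction d arbitrary: k) auto

lemma path_parts_Cons:
  "path_parts k (x # w) = (if x then path_parts (Suc k) w else k # path_parts k w)"
  by (cases x) auto

lemma inj_path_parts: "inj (path_parts k)"
proof
  show "path_parts k v = path_parts k w \<Longrightarrow> v = w" for v w
  proof (induction v arbitrary: k w)
    case Nil
    then show ?case
      by (cases w) (auto simp: path_parts_Cons split: if_splits dest: sym)
  next
    case Cons
    then show ?case
      by (cases w) (auto simp: path_parts_Cons split: if_splits dest: sym)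
  qed
qed

lemma path_parts_surj:
  assumes "sorted q" "q \<noteq> []" "\<forall>x\<in>set q. k \<le> x"
  shows "\<exists>w. path_parts k w = q"
  using assms
proof (induction q arbitrary: k)
  case Nil
  then show ?case by simp
next
  case (Cons x q)
  have "\<exists>w. path_parts x w = x # q"
  proof (cases "q = []")
    case True
    then show ?thesis by (metis path_parts.simps(1))
  next
    case False
    with Cons.prems Cons.IH[of x] obtain w where "path_parts x w = q" by auto
    then show ?thesis by (metis path_parts.simps(3))
  qed
  then obtain w where "path_parts x w = x # q" ..
  then have "path_parts k (replicate (x - k) True @ w) = x # q"
    using Cons.prems by (simp add: path_parts_replicate_True)
  then show ?case ..
qed

lemma is_partition_iff_sorted_rev: "is_partition p \<longleftrightarrow> sorted (rev p) \<and> (\<forall>x\<in>set p. 1 \<le> x)"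
  by (auto simp: is_partition_def sorted_wrt_rev Suc_le_eq)

lemma partitions_perim_eq_image:
  assumes "n \<ge> 1"
  shows "partitions_perim n = (\<lambda>w. rev (path_parts 1 w)) ` {w. length w = n - 1}"
proof (intro equalityI subsetI)
  fix p assume "p \<in> (\<lambda>w. rev (path_parts 1 w)) ` {w. length w = n - 1}"
  then obtain w where "length w = n - 1" "p = rev (path_parts 1 w)" by auto
  then show "p \<in> partitions_perim n"
    using assms sorted_path_parts[of 1 w] path_parts_ge[of _ 1 w]
    by (auto simp: partitions_perim_def is_partition_iff_sorted_rev perimeter_rev_path_parts)
next
  fix p assume "p \<in> partitions_perim n"
  then have p: "sorted (rev p)" "p \<noteq> []" "\<forall>x\<in>set p. 1 \<le> x" "perimeter p = n"
    by (auto simp: partitions_perim_def is_partition_iff_sorted_rev)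
  then obtain w where w: "path_parts 1 w = rev p"
    using path_parts_surj[of "rev p" 1] by auto
  then have "length w = n - 1"
    using p(4) perimeter_rev_path_parts[of 1 w] by simp
  with w show "p \<in> (\<lambda>w. rev (path_parts 1 w)) ` {w. length w = n - 1}"
    by (metis (mono_tags, lifting) image_eqI mem_Collect_eq rev_rev_ident)
qed

lemma card_partitions_perim_filter:
  assumes "n \<ge> 1"
  shows "card {p \<in> partitions_perim n. P p}
    = card {w. length w = n - 1 \<and> P (rev (path_parts 1 w))}"
proof -
  have "{p \<in> partitions_perim n. P p}
      = (\<lambda>w. rev (path_parts 1 w)) ` {w. length w = n - 1 \<and> P (rev (path_parts 1 w))}"
    using partitions_perim_eq_image[OF assms] by auto
  moreover have "inj (\<lambda>w. rev (path_parts 1 w))"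
    using inj_path_parts by (simp add: inj_def)
  ultimately show ?thesis
    by (simp add: card_image inj_on_subset)
qed

text \<open>
  \<open>even_parts_count e fresh w\<close> counts the factors \<open>[True, False]\<close> of \<open>fresh # w @ [False]\<close>
  whose letter \<open>False\<close> is read at even height, \<open>e\<close> being the parity of the current height;
  \<open>repeated_parts_count prev cur w\<close> counts the factors \<open>[True, False, False]\<close> of
  \<open>prev # cur # w @ [False]\<close>.
\<close>

fun even_parts_count :: "bool \<Rightarrow> bool \<Rightarrow> bool list \<Rightarrow> nat" where
  "even_parts_count e fresh [] = of_bool (fresh \<and> e)"
| "even_parts_count e fresh (x # w) =
     of_bool (fresh \<and> e \<and> \<not> x) + even_parts_count (e \<noteq> x) x w"

fun repeated_parts_count :: "bool \<Rightarrow> bool \<Rightarrow> bool list \<Rightarrow> nat" where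
  "repeated_parts_count prev cur [] = of_bool (prev \<and> \<not> cur)"
| "repeated_parts_count prev cur (x # w) =
     of_bool (prev \<and> \<not> cur \<and> \<not> x) + repeated_parts_count cur x w"

lemma replicate_append_Cons_same: "replicate m k @ k # ys = replicate (Suc m) k @ ys"
  by (simp add: replicate_app_Cons_same)

lemma card_even_path_parts:
  "card {x \<in> set (replicate m k @ path_parts k w). even x}
    = of_bool (0 < m \<and> even k) + even_parts_count (even k) (m = 0) w"
proof (induction w arbitrary: k m)
  case Nil
  have "{y \<in> set (replicate m k @ path_parts k []). even y} = (if even k then {k} else {})"
    by auto
  then show ?case by simp
next
  case (Cons x w)
  show ?case
  proof (cases x)
    case True
    have "{y \<in> set (replicate m k @ path_parts (Suc k) w). even y}
        = {y \<in> set (replicate m k). even y} \<union> {y \<in> set (path_parts (Suc k) w). even y}"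
      by auto
    moreover have "{y \<in> set (replicate m k). even y} \<inter> {y \<in> set (path_parts (Suc k) w). even y} = {}"
      by auto
    moreover have "{y \<in> set (replicate m k). even y} = (if 0 < m \<and> even k then {k} else {})"
      by auto
    ultimately show ?thesis
      using True Cons.IH[where k = "Suc k" and m = 0] by (simp add: card_Un_disjoint)
  next
    case False
    then show ?thesis
      using Cons.IH[where m = "Suc m"] by (simp add: replicate_append_Cons_same)
  qed
qed

lemma repeated_parts_count_fresh:
  "repeated_parts_count prev True w = repeated_parts_count prev' True w"
  by (cases w) auto

lemma count_list_replicate: "count_list (replicate m k) y = (if y = k then m else 0)"
  by (induction m) auto

lemma card_repeated_path_parts:
  "card {y \<in> set (replicate m k @ path_parts k w).
           2 \<le> count_list (replicate m k @ path_parts k w) y}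
    = of_bool (2 \<le> m) + repeated_parts_count (m = 1) (m = 0) w"
proof (induction w arbitrary: k m)
  case Nil
  have "{y \<in> set (replicate m k @ path_parts k []).
           2 \<le> count_list (replicate m k @ path_parts k []) y} = (if 1 \<le> m then {k} else {})"
    by (auto simp: count_list_replicate)
  then show ?case by simp
next
  case (Cons x w)
  show ?case
  proof (cases x)
    case True
    let ?P = "path_parts (Suc k) w"
    have "{y \<in> set (replicate m k @ ?P). 2 \<le> count_list (replicate m k @ ?P) y}
        = (if 2 \<le> m then {k} else {}) \<union> {y \<in> set ?P. 2 \<le> count_list ?P y}"
      by (auto simp: count_list_replicate)
    then show ?thesis
      using True Cons.IH[where k = "Suc k" and m = 0] repeated_parts_count_fresh[of "m = 0" w False]
      by (simp add: card_insert_if)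
  next
    case False
    then show ?thesis
      using Cons.IH[where m = "Suc m"] by (simp add: replicate_append_Cons_same)
  qed
qed

fun adjacent_xor :: "bool \<Rightarrow> bool list \<Rightarrow> bool list" where
  "adjacent_xor b [] = []"
| "adjacent_xor b (x # w) = (b \<noteq> x) # adjacent_xor x w"

fun prefix_xor :: "bool \<Rightarrow> bool list \<Rightarrow> bool list" where
  "prefix_xor b [] = []"
| "prefix_xor b (y # w) = (b \<noteq> y) # prefix_xor (b \<noteq> y) w"

lemma prefix_xor_adjacent_xor [simp]: "prefix_xor b (adjacent_xor b w) = w"
proof (induction w arbitrary: b)
  case (Cons x w)
  have "(b \<noteq> (b \<noteq> x)) = x" by blast
  with Cons.IH show ?case by simp
qed simp

lemma adjacent_xor_prefix_xor [simp]: "adjacent_xor b (prefix_xor b w) = w"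
  by (induction w arbitrary: b) auto

lemma length_adjacent_xor [simp]: "length (adjacent_xor b w) = length w"
  by (induction w arbitrary: b) auto

lemma length_prefix_xor [simp]: "length (prefix_xor b w) = length w"
  by (induction w arbitrary: b) auto

lemma even_parts_count_adjacent_xor:
  "even_parts_count (\<not> cur) (prev \<noteq> cur) (adjacent_xor cur w) = repeated_parts_count prev cur w"
proof (induction w arbitrary: prev cur)
  case (Cons x w)
  show ?case
    using Cons.IH[where prev = cur and cur = x] by (cases cur; cases x; cases prev) simp_all
qed auto

lemma bij_betw_adjacent_xor:
  "bij_betw (adjacent_xor True)
     {w. length w = m \<and> repeated_parts_count False True w = j}
     {w. length w = m \<and> even_parts_count False True w = j}"
  by (rule bij_betw_byWitness[where f' = "prefix_xor True"])
     (auto simp: even_parts_count_adjacent_xor[of True False, symmetric])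

theorem theorem1p1:
  fixes n j :: nat
  assumes "n \<ge> 1"
  shows "FO2 j n = FD2 j n"
proof -
  have "FO2 j n = card {w. length w = n - 1 \<and> even_parts_count False True w = j}"
    unfolding FO2_def card_partitions_perim_filter[OF assms]
    using card_even_path_parts[where m = 0 and k = 1] by simp
  also have "\<dots> = card {w. length w = n - 1 \<and> repeated_parts_count False True w = j}"
    using bij_betw_same_card[OF bij_betw_adjacent_xor] by simp
  also have "\<dots> = FD2 j n"
    unfolding FD2_def card_partitions_perim_filter[OF assms]
    using card_repeated_path_parts[where m = 0 and k = 1] by simp
  finally show ?thesis .
qed

end
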